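(* Let $k>l>0$ be coprime integers, $\lambda=\lambda_{k,l}$, and let $$T=\begin{pmatrix}1&k(1+\lambda)\\0&1\end{pmatrix},\qquad R=\begin{pmatrix}-1&-1\\1&0\end{pmatrix}.$$ Then the group $G=\langle R,T\rangle\subseteq \mathrm{PSL}(2,\mathbb{R})$ is discrete. Moreover, $$F=\{z\in\mathbb{H}:\ -2<\operatorname{Re}z<k(1+\lambda)-2,\ |z|>1,\ |z+1|>1\}$$ is a fundamental domain for the action of $G$ on $\mathbb{H}$ by Möbius transformations.
   Context: For coprime integers $k>l>0$, $\lambda_{k,l}$ denotes the positive solution of $k(\lambda+1)=l(\lambda^{-1}+1+\lambda)$. $\mathbb{H}$ is the upper half-plane. *)

theory Defs
  imports "HOL-Analysis.Analysis"
begin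

definition lambda_kl :: "int \<Rightarrow> int \<Rightarrow> real" where
  "lambda_kl k l = (THE x. x > 0 \<and> real_of_int k * (x + 1) = real_of_int l * (inverse x + 1 + x))"

definition upper_half_plane :: "complex set" where
  "upper_half_plane = {z. Im z > 0}"

definition mat2 :: "real \<Rightarrow> real \<Rightarrow> real \<Rightarrow> real \<Rightarrow> real^2^2" where
  "mat2 a b c d = (\<chi> i j. if i = 1 then (if j = 1 then a else b) else (if j = 1 then c else d))"

definition mobius :: "real^2^2 \<Rightarrow> complex \<Rightarrow> complex" where
  "mobius A z = (of_real (A$1$1) * z + of_real (A$1$2)) / (of_real (A$2$1) * z + of_real (A$2$2))"

inductive_set gen_group :: "(real^2^2) set \<Rightarrow> (real^2^2) set" for S where
  gen_one: "mat 1 \<in> gen_group S"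
| gen_mul: "g \<in> gen_group S \<Longrightarrow> s \<in> S \<Longrightarrow> g ** s \<in> gen_group S"
| gen_inv: "g \<in> gen_group S \<Longrightarrow> s \<in> S \<Longrightarrow> g ** matrix_inv s \<in> gen_group S"

text \<open>A set H of SL(2,R) matrices is discrete as a subset of PSL(2,R) = SL(2,R)/{+-I}:
  every class \<open>\<plusminus>g\<close> has a neighbourhood containing no other class of H.\<close>
definition discrete_in_PSL :: "(real^2^2) set \<Rightarrow> bool" where
  "discrete_in_PSL H \<longleftrightarrow> (\<forall>g\<in>H. \<exists>e>0. \<forall>h\<in>H.
      (dist h g < e \<or> dist h (- g) < e) \<longrightarrow> (h = g \<or> h = - g))"

definition fundamental_domain :: "(real^2^2) set \<Rightarrow> complex set \<Rightarrow> bool" where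
  "fundamental_domain G F \<longleftrightarrow>
     open F \<and> F \<subseteq> upper_half_plane \<and>
     upper_half_plane \<subseteq> (\<Union>g\<in>G. mobius g ` (closure F \<inter> upper_half_plane)) \<and>
     (\<forall>g\<in>G. g \<noteq> mat 1 \<and> g \<noteq> - mat 1 \<longrightarrow> mobius g ` F \<inter> F = {})"

end

theory Submission
  imports Defs
begin

text \<open>
  Write \<open>w = k(1 + \<lambda>)\<close>; all that is used about \<open>k\<close> and \<open>l\<close> is \<open>w \<ge> 3\<close>.
  The element \<open>R\<close> has order 3, and both \<open>R\<close> and \<open>R\<^sup>-\<^sup>1 = R\<^sup>2\<close> map the region outside the unit
  circles about \<open>0\<close> and \<open>-1\<close> into the inside of one of them, while every nontrivial power of \<open>T\<close>
  maps the strip \<open>-2 < Re z < w - 2\<close> into its complement. A ping-pong argument on reduced words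
  in \<open>R\<^sup>\<plusminus>\<^sup>1\<close> and \<open>T\<^sup>n\<close> therefore shows that only the identity maps a point of \<open>F\<close> into \<open>F\<close>;
  with the continuity of \<open>g \<mapsto> g z\<^sub>0\<close> for a fixed \<open>z\<^sub>0 \<in> F\<close> this also gives discreteness.
  Conversely, translating a point of height at least \<open>y\<^sub>0\<close> into the strip and, if it then lies
  inside one of the two circles, applying \<open>R\<close> or \<open>R\<^sup>-\<^sup>1\<close> multiplies its height by at least
  \<open>1 + y\<^sub>0\<^sup>2\<close>. A point of the strip inside a circle has height below 1, so after finitely many
  steps the point lands in the closure of \<open>F\<close>.
\<close>

section \<open>Matrices and Moebius transformations\<close>

lemma mat2_nth [simp]:
  "mat2 a b c d $1$1 = a" "mat2 a b c d $1$2 = b" "mat2 a b c d $2$1 = c" "mat2 a b c d $2$2 = d"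
  by (simp_all add: mat2_def)

lemma mat2_entries: "(A::real^2^2) = mat2 (A$1$1) (A$1$2) (A$2$1) (A$2$2)"
  by (simp add: mat2_def vec_eq_iff forall_2)

lemma mat2_mult:
  "mat2 a b c d ** mat2 p q r t = mat2 (a*p + b*r) (a*q + b*t) (c*p + d*r) (c*q + d*t)"
  by (simp add: mat2_def matrix_matrix_mult_def vec_eq_iff forall_2 sum_2)

lemma mat2_one: "mat 1 = mat2 1 0 0 1"
  by (simp add: mat2_def mat_def vec_eq_iff forall_2)

lemma det_mat2: "det (mat2 a b c d) = a*d - b*c"
  by (simp add: det_2)

lemma matrix_mul_minus_right: "(A::real^'n^'m) ** (- B) = - (A ** B)"
  by (simp add: matrix_matrix_mult_def vec_eq_iff sum_negf)

lemma matrix_inv_eqI: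
  fixes A B :: "real^'n^'n"
  assumes "A ** B = mat 1" "B ** A = mat 1"
  shows "matrix_inv A = B"
  unfolding matrix_inv_def
proof (rule some_equality)
  fix C assume "A ** C = mat 1 \<and> C ** A = mat 1"
  then have "C = C ** (A ** B)" using assms by simp
  also have "\<dots> = (C ** A) ** B" by (simp add: matrix_mul_assoc)
  finally show "C = B" using \<open>A ** C = mat 1 \<and> C ** A = mat 1\<close> by simp
qed (use assms in simp)

lemma mobius_mat2: "mobius (mat2 a b c d) z = (of_real a * z + of_real b) / (of_real c * z + of_real d)"
  by (simp add: mobius_def)

lemma mobius_denom_nonzero:
  assumes "Im z \<noteq> 0" "c \<noteq> 0 \<or> d \<noteq> 0"
  shows "of_real c * z + of_real d \<noteq> (0::complex)"
proof
  assume eq: "of_real c * z + of_real d = 0"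
  have "c * Im z = 0" using arg_cong[OF eq, of Im] by simp
  moreover have "c * Re z + d = 0" using arg_cong[OF eq, of Re] by simp
  ultimately show False using assms by auto
qed

lemma mobius_mat2_mult:
  assumes "Im z \<noteq> 0" "a*d - b*c \<noteq> 0" "p*t - q*r \<noteq> 0"
  shows "mobius (mat2 a b c d ** mat2 p q r t) z = mobius (mat2 a b c d) (mobius (mat2 p q r t) z)"
proof -
  have inner: "of_real r * z + of_real t \<noteq> 0"
    using assms by (intro mobius_denom_nonzero) auto
  have "c*p + d*r \<noteq> 0 \<or> c*q + d*t \<noteq> 0"
  proof (rule ccontr)
    assume "\<not> ?thesis"
    then have "c * (p*t - q*r) = 0" "d * (p*t - q*r) = 0" by algebra+
    then show False using assms by auto
  qed
  then have "of_real (c*p + d*r) * z + of_real (c*q + d*t) \<noteq> 0"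
    by (rule mobius_denom_nonzero[OF assms(1)])
  then have outer: "of_real c * (of_real p * z + of_real q) + of_real d * (of_real r * z + of_real t) \<noteq> 0"
    by (simp add: algebra_simps)
  have field: "(A * (u / D) + B) / (C * (u / D) + E) = (A * u + B * D) / (C * u + E * D)"
    if "D \<noteq> 0" "C * u + E * D \<noteq> 0" for A B C D E u :: complex
  proof -
    have "A * (u / D) + B = (A * u + B * D) / D" "C * (u / D) + E = (C * u + E * D) / D"
      using that by (simp_all add: field_simps)
    then show ?thesis using that by simp
  qed
  show ?thesis
    unfolding mat2_mult mobius_mat2 field[OF inner outer] by (simp add: algebra_simps)
qed

lemma mobius_mult:
  fixes A B :: "real^2^2"
  assumes "Im z \<noteq> 0" "det A \<noteq> 0" "det B \<noteq> 0"
  shows "mobius (A ** B) z = mobius A (mobius B z)"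
proof -
  obtain a b c d p q r t where "A = mat2 a b c d" "B = mat2 p q r t"
    using mat2_entries by metis
  then show ?thesis using mobius_mat2_mult[OF assms(1)] assms(2,3) by (simp add: det_mat2)
qed

lemma mobius_one [simp]: "mobius (mat 1) z = z"
  by (simp add: mat2_one mobius_mat2)

lemma mobius_uminus [simp]: "mobius (- A) z = mobius A z"
proof -
  have "(of_real (-a) * z + of_real (-b)) / (of_real (-c) * z + of_real (-d)) =
        (of_real a * z + of_real b) / (of_real c * z + of_real d)" for a b c d :: real
  proof -
    have "of_real (-a) * z + of_real (-b) = - (of_real a * z + of_real b)"
      "of_real (-c) * z + of_real (-d) = - (of_real c * z + of_real d)" by simp_all
    then show ?thesis by (simp only: minus_divide_divide)
  qed
  then show ?thesis by (simp add: mobius_def)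
qed

section \<open>The group generated by \<open>R\<close> and \<open>T\<close>\<close>

definition T_pow :: "real \<Rightarrow> int \<Rightarrow> real^2^2" where
  "T_pow w n = mat2 1 (of_int n * w) 0 1"

definition R_mat :: "real^2^2" where
  "R_mat = mat2 (-1) (-1) 1 0"

definition R_inv :: "real^2^2" where
  "R_inv = mat2 0 1 (-1) (-1)"

definition adjugate2 :: "real^2^2 \<Rightarrow> real^2^2" where
  "adjugate2 A = mat2 (A$2$2) (-(A$1$2)) (-(A$2$1)) (A$1$1)"

abbreviation RT_group :: "real \<Rightarrow> (real^2^2) set" where
  "RT_group w \<equiv> gen_group {R_mat, mat2 1 w 0 1}"

abbreviation RT_letters :: "real \<Rightarrow> (real^2^2) set" where
  "RT_letters w \<equiv> {R_mat, R_inv, T_pow w 1, T_pow w (-1)}"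

lemma T_pow_one: "T_pow w 1 = mat2 1 w 0 1"
  by (simp add: T_pow_def)

lemma T_pow_zero: "T_pow w 0 = mat 1"
  by (simp add: T_pow_def mat2_one)

lemma T_pow_add: "T_pow w m ** T_pow w n = T_pow w (m + n)"
  by (simp add: T_pow_def mat2_mult algebra_simps)

lemma R_mat_mult:
  "R_mat ** R_mat = R_inv" "R_mat ** R_inv = mat 1" "R_inv ** R_mat = mat 1" "R_inv ** R_inv = R_mat"
  by (simp_all add: R_mat_def R_inv_def mat2_mult mat2_one)

lemma det_T_pow: "det (T_pow w n) = 1"
  by (simp add: T_pow_def det_mat2)

lemma det_R: "det R_mat = 1" "det R_inv = 1"
  by (simp_all add: R_mat_def R_inv_def det_mat2)

lemma matrix_inv_R_mat: "matrix_inv R_mat = R_inv"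
  by (rule matrix_inv_eqI) (simp_all add: R_mat_mult)

lemma matrix_inv_T: "matrix_inv (mat2 1 w 0 1) = T_pow w (-1)"
  by (rule matrix_inv_eqI) (simp_all add: T_pow_def mat2_mult mat2_one)

lemma mobius_T_pow: "mobius (T_pow w n) z = z + of_real (of_int n * w)"
  by (simp add: T_pow_def mobius_mat2)

lemma mobius_R_mat: "z \<noteq> 0 \<Longrightarrow> mobius R_mat z = - (1 / z) - 1"
  by (simp add: R_mat_def mobius_mat2 field_simps)

lemma mobius_R_inv: "mobius R_inv z = - (1 / (z + 1))"
proof -
  have "1 / (- z - 1) = 1 / - (z + 1)" by simp
  then show ?thesis by (simp add: R_inv_def mobius_mat2 divide_minus_right del: minus_add_distrib)
qed

lemma adjugate2_mult: "adjugate2 (A ** B) = adjugate2 B ** adjugate2 A"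
proof -
  have "adjugate2 (mat2 a b c d ** mat2 p q r t) = adjugate2 (mat2 p q r t) ** adjugate2 (mat2 a b c d)"
    for a b c d p q r t
    by (simp add: adjugate2_def mat2_mult algebra_simps)
  then show ?thesis by (metis mat2_entries)
qed

lemma adjugate2_one: "adjugate2 (mat 1) = mat 1"
  by (simp add: adjugate2_def mat2_one)

lemma adjugate2_generators:
  "adjugate2 R_mat = R_inv" "adjugate2 R_inv = R_mat" "adjugate2 (T_pow w n) = T_pow w (- n)"
  by (simp_all add: adjugate2_def R_mat_def R_inv_def T_pow_def)

lemma adjugate2_mult_left: "det A = 1 \<Longrightarrow> adjugate2 A ** A = mat 1"
  by (subst (2) mat2_entries[of A]) (simp add: adjugate2_def mat2_mult mat2_one det_2 algebra_simps)

lemma adjugate2_mult_right: "det A = 1 \<Longrightarrow> A ** adjugate2 A = mat 1"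
  by (subst (1) mat2_entries[of A]) (simp add: adjugate2_def mat2_mult mat2_one det_2 algebra_simps)

lemma RT_group_det: "g \<in> RT_group w \<Longrightarrow> det g = 1"
  by (induction rule: gen_group.induct)
    (auto simp: det_mul matrix_inv_R_mat matrix_inv_T det_T_pow det_R det_mat2)

lemma RT_group_mult_left:
  assumes "g \<in> RT_group w" "s \<in> RT_letters w"
  shows "s ** g \<in> RT_group w"
  using assms(1)
proof (induction rule: gen_group.induct)
  case gen_one
  have "mat 1 ** R_mat \<in> RT_group w" "mat 1 ** mat2 1 w 0 1 \<in> RT_group w"
    by (rule gen_group.gen_mul[OF gen_group.gen_one]; simp)+
  moreover have "mat 1 ** matrix_inv R_mat \<in> RT_group w" "mat 1 ** matrix_inv (mat2 1 w 0 1) \<in> RT_group w"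
    by (rule gen_group.gen_inv[OF gen_group.gen_one]; simp)+
  ultimately show ?case
    using assms(2) by (auto simp: matrix_inv_R_mat matrix_inv_T T_pow_one)
next
  case (gen_mul g s')
  then show ?case by (metis gen_group.gen_mul matrix_mul_assoc)
next
  case (gen_inv g s')
  then show ?case by (metis gen_group.gen_inv matrix_mul_assoc)
qed

lemma RT_group_mult:
  assumes "g \<in> RT_group w" "h \<in> RT_group w"
  shows "g ** h \<in> RT_group w"
  using assms(2)
proof (induction rule: gen_group.induct)
  case gen_one then show ?case using assms(1) by simp
next
  case (gen_mul h s) then show ?case by (metis gen_group.gen_mul matrix_mul_assoc)
next
  case (gen_inv h s) then show ?case by (metis gen_group.gen_inv matrix_mul_assoc)
qed

lemma RT_group_adjugate2: "g \<in> RT_group w \<Longrightarrow> adjugate2 g \<in> RT_group w"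
proof (induction rule: gen_group.induct)
  case gen_one
  then show ?case by (simp add: adjugate2_one gen_group.gen_one)
next
  case (gen_mul g s)
  then have "adjugate2 s \<in> RT_letters w"
    by (auto simp: adjugate2_generators T_pow_one[symmetric])
  then show ?case using gen_mul by (simp add: adjugate2_mult RT_group_mult_left)
next
  case (gen_inv g s)
  then have "adjugate2 (matrix_inv s) \<in> RT_letters w"
    by (auto simp: adjugate2_generators matrix_inv_R_mat matrix_inv_T)
  then show ?case using gen_inv by (simp add: adjugate2_mult RT_group_mult_left)
qed

lemma RT_group_R: "R_mat \<in> RT_group w" "R_inv \<in> RT_group w"
  using RT_group_mult_left[OF gen_group.gen_one, of _ w] by auto

lemma RT_group_T_pow: "T_pow w n \<in> RT_group w"
proof -
  have "T_pow w (int m) \<in> RT_group w \<and> T_pow w (- int m) \<in> RT_group w" for m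
  proof (induction m)
    case 0
    then show ?case by (simp add: T_pow_zero gen_group.gen_one)
  next
    case (Suc m)
    have "T_pow w (int (Suc m)) = T_pow w 1 ** T_pow w (int m)"
      "T_pow w (- int (Suc m)) = T_pow w (-1) ** T_pow w (- int m)"
      by (simp_all add: T_pow_add)
    then show ?case using Suc RT_group_mult_left by auto
  qed
  then show ?thesis by (metis int_cases2)
qed

section \<open>Reduced words and ping-pong\<close>

text \<open>Normal forms in the free product \<open>\<langle>R\<rangle> * \<langle>T\<rangle>\<close>, classified by their leftmost letter.\<close>

datatype word_head = Empty | Transl | Rot

inductive reduced_word :: "real \<Rightarrow> word_head \<Rightarrow> real^2^2 \<Rightarrow> bool" for w where
  empty: "reduced_word w Empty (mat 1)"
| transl: "reduced_word w h g \<Longrightarrow> h \<noteq> Transl \<Longrightarrow> n \<noteq> 0 \<Longrightarrow> reduced_word w Transl (T_pow w n ** g)"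
| rot: "reduced_word w h g \<Longrightarrow> h \<noteq> Rot \<Longrightarrow> S \<in> {R_mat, R_inv} \<Longrightarrow> reduced_word w Rot (S ** g)"

lemma R_mult_cases: "S \<in> {R_mat, R_inv} \<Longrightarrow> S' \<in> {R_mat, R_inv} \<Longrightarrow> S ** S' \<in> {mat 1, R_mat, R_inv}"
  using R_mat_mult by auto

lemma reduced_word_mult_left:
  assumes "reduced_word w h g" "s \<in> RT_letters w"
  shows "\<exists>h'. reduced_word w h' (s ** g)"
  using assms(1)
proof cases
  case empty
  then show ?thesis
    using assms(2) reduced_word.transl[OF reduced_word.empty, of 1 w] reduced_word.transl[OF reduced_word.empty, of "-1" w]
      reduced_word.rot[OF reduced_word.empty, of _ w] by auto
next
  case (transl h0 g0 n)
  consider m where "m \<in> {1, -1}" "s = T_pow w m" | "s \<in> {R_mat, R_inv}"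
    using assms(2) by auto
  then show ?thesis
  proof cases
    case (1 m)
    then have "s ** g = T_pow w (m + n) ** g0"
      using transl by (simp add: matrix_mul_assoc T_pow_add)
    then show ?thesis
      using transl reduced_word.transl[of w h0 g0 "m + n"] by (cases "m + n = 0") (auto simp: T_pow_zero)
  next
    case 2
    then show ?thesis using reduced_word.rot[OF assms(1)] transl by auto
  qed
next
  case (rot h0 g0 S)
  consider m where "s = T_pow w m" "m \<noteq> 0" | "s \<in> {R_mat, R_inv}"
    using assms(2) by auto
  then show ?thesis
  proof cases
    case 1
    then show ?thesis using reduced_word.transl[OF assms(1)] rot by auto
  next
    case 2
    then have "s ** S \<in> {mat 1, R_mat, R_inv}" using rot R_mult_cases by blast
    moreover have "s ** g = (s ** S) ** g0" using rot by (simp add: matrix_mul_assoc)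
    ultimately show ?thesis using rot reduced_word.rot[of w h0 g0] by auto
  qed
qed

lemma RT_group_reduced_word:
  assumes "g \<in> RT_group w"
  shows "\<exists>h. reduced_word w h g"
proof -
  have "reduced_word w h x \<Longrightarrow> \<exists>h'. reduced_word w h' (g ** x)" for h x
    using assms
  proof (induction arbitrary: h x rule: gen_group.induct)
    case gen_one
    then show ?case by auto
  next
    case (gen_mul g s)
    then have "s \<in> RT_letters w" by (auto simp: T_pow_one)
    then show ?case using gen_mul reduced_word_mult_left by (metis matrix_mul_assoc)
  next
    case (gen_inv g s)
    then have "matrix_inv s \<in> RT_letters w"
      by (auto simp: matrix_inv_R_mat matrix_inv_T)
    then show ?case using gen_inv reduced_word_mult_left by (metis matrix_mul_assoc)
  qed
  then show ?thesis using reduced_word.empty by (metis matrix_mul_rid)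
qed

lemma det_reduced_word: "reduced_word w h g \<Longrightarrow> det g = 1"
  by (induction rule: reduced_word.induct) (auto simp: det_mul det_T_pow det_R)

definition Fdom :: "real \<Rightarrow> complex set" where
  "Fdom w = {z. 0 < Im z \<and> -2 < Re z \<and> Re z < w - 2 \<and> 1 < cmod z \<and> 1 < cmod (z + 1)}"

fun pingpong_set :: "real \<Rightarrow> word_head \<Rightarrow> complex set" where
  "pingpong_set w Empty = Fdom w"
| "pingpong_set w Transl = {u. 0 < Im u \<and> (Re u < -2 \<or> w - 2 < Re u)}"
| "pingpong_set w Rot = {u. 0 < Im u \<and> (cmod u < 1 \<or> cmod (u + 1) < 1)}"

lemma pingpong_set_not_Transl:
  assumes "3 \<le> w" "h \<noteq> Transl" "u \<in> pingpong_set w h"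
  shows "0 < Im u \<and> -2 < Re u \<and> Re u < w - 2"
proof -
  have "\<bar>Re u\<bar> \<le> cmod u" "\<bar>Re u + 1\<bar> \<le> cmod (u + 1)"
    using abs_Re_le_cmod[of u] abs_Re_le_cmod[of "u + 1"] by auto
  then show ?thesis using assms by (cases h) (auto simp: Fdom_def)
qed

lemma pingpong_set_not_Rot:
  assumes "3 \<le> w" "h \<noteq> Rot" "u \<in> pingpong_set w h"
  shows "0 < Im u \<and> 1 < cmod u \<and> 1 < cmod (u + 1)"
proof -
  have "\<bar>Re u\<bar> \<le> cmod u" "\<bar>Re u + 1\<bar> \<le> cmod (u + 1)"
    using abs_Re_le_cmod[of u] abs_Re_le_cmod[of "u + 1"] by auto
  then show ?thesis using assms by (cases h) (auto simp: Fdom_def)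
qed

lemma pingpong_set_disjoint: "h \<noteq> Empty \<Longrightarrow> pingpong_set w h \<inter> Fdom w = {}"
  by (cases h) (auto simp: Fdom_def)

lemma Im_minus_inverse: "Im (- (1 / z)) = Im z / (cmod z)\<^sup>2"
  by (simp add: Im_divide cmod_power2)

lemma minus_inverse_into_disc:
  assumes "0 < Im z" "1 < cmod z"
  shows "0 < Im (- (1 / z)) \<and> cmod (- (1 / z)) < 1"
proof -
  have "0 < cmod z" using assms(2) by linarith
  then show ?thesis
    unfolding Im_minus_inverse using assms by (simp add: norm_divide)
qed

lemma mobius_R_into_pingpong_set:
  assumes "0 < Im u" "1 < cmod u" "1 < cmod (u + 1)" "S \<in> {R_mat, R_inv}"
  shows "mobius S u \<in> pingpong_set w Rot"
proof (cases "S = R_mat")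
  case True
  have "u \<noteq> 0" using assms(1) by auto
  then have "mobius S u + 1 = - (1 / u)" by (simp add: True mobius_R_mat)
  moreover have "Im (mobius S u) = Im (mobius S u + 1)" by simp
  ultimately show ?thesis using minus_inverse_into_disc[OF assms(1,2)] by auto
next
  case False
  then have "mobius S u = - (1 / (u + 1))" using assms(4) by (simp add: mobius_R_inv)
  then show ?thesis using minus_inverse_into_disc[of "u + 1"] assms(1,3) by auto
qed

lemma reduced_word_mobius:
  assumes "reduced_word w h g" "3 \<le> w" "z \<in> Fdom w"
  shows "mobius g z \<in> pingpong_set w h"
  using assms(1)
proof (induction rule: reduced_word.induct)
  case empty
  then show ?case using assms(3) by simp
next
  case (transl h g n)
  have "Im z \<noteq> 0" using assms(3) by (simp add: Fdom_def)
  then have shift: "mobius (T_pow w n ** g) z = mobius g z + of_real (of_int n * w)"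
    by (simp add: mobius_mult det_T_pow det_reduced_word[OF transl.hyps(1)] mobius_T_pow)
  have strip: "0 < Im (mobius g z) \<and> -2 < Re (mobius g z) \<and> Re (mobius g z) < w - 2"
    using pingpong_set_not_Transl[OF assms(2) transl.hyps(2) transl.IH] .
  have "w \<le> of_int n * w \<or> of_int n * w \<le> - w"
  proof (cases "0 < n")
    case True
    then have "1 * w \<le> of_int n * w" using assms(2) by (intro mult_right_mono) auto
    then show ?thesis by simp
  next
    case False
    then have "of_int n * w \<le> (-1) * w" using transl.hyps(3) assms(2) by (intro mult_right_mono) auto
    then show ?thesis by simp
  qed
  then have "Re (mobius g z) + of_int n * w < -2 \<or> w - 2 < Re (mobius g z) + of_int n * w"
    using strip by linarith
  then show ?case using strip by (simp add: shift)
next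
  case (rot h g S)
  have "Im z \<noteq> 0" using assms(3) by (simp add: Fdom_def)
  then have "mobius (S ** g) z = mobius S (mobius g z)"
    using rot.hyps(3) by (intro mobius_mult) (auto simp: det_R det_reduced_word[OF rot.hyps(1)])
  then show ?case
    using pingpong_set_not_Rot[OF assms(2) rot.hyps(2) rot.IH] mobius_R_into_pingpong_set rot.hyps(3) by auto
qed

theorem RT_group_Fdom_disjoint:
  assumes "g \<in> RT_group w" "3 \<le> w" "z \<in> Fdom w" "mobius g z \<in> Fdom w"
  shows "g = mat 1"
proof -
  obtain h where h: "reduced_word w h g" using RT_group_reduced_word[OF assms(1)] by blast
  have "h = Empty"
    using reduced_word_mobius[OF h assms(2,3)] pingpong_set_disjoint assms(4) by blast
  then show ?thesis using h by (auto elim: reduced_word.cases)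
qed

section \<open>Covering the upper half-plane\<close>

definition Fbar :: "real \<Rightarrow> complex set" where
  "Fbar w = {c. 0 < Im c \<and> -2 \<le> Re c \<and> Re c \<le> w - 2 \<and> 1 \<le> cmod c \<and> 1 \<le> cmod (c + 1)}"

definition RT_orbit :: "real \<Rightarrow> complex set \<Rightarrow> complex set" where
  "RT_orbit w A = (\<Union>g\<in>RT_group w. mobius g ` A)"

lemma subset_RT_orbit: "A \<subseteq> RT_orbit w A"
  unfolding RT_orbit_def using gen_group.gen_one by force

lemma RT_orbit_mobius:
  assumes "g \<in> RT_group w" "A \<subseteq> upper_half_plane" "z \<in> RT_orbit w A"
  shows "mobius g z \<in> RT_orbit w A"
proof -
  obtain h c where hc: "h \<in> RT_group w" "c \<in> A" "z = mobius h c"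
    using assms(3) by (auto simp: RT_orbit_def)
  have "Im c \<noteq> 0" using hc(2) assms(2) by (auto simp: upper_half_plane_def)
  then have "mobius g z = mobius (g ** h) c"
    using hc(1,3) assms(1) by (simp add: mobius_mult RT_group_det)
  moreover have "g ** h \<in> RT_group w" using RT_group_mult[OF assms(1) hc(1)] .
  ultimately show ?thesis using hc(2) by (auto simp: RT_orbit_def)
qed

lemma Fbar_upper_half_plane: "Fbar w \<subseteq> upper_half_plane"
  by (auto simp: Fbar_def upper_half_plane_def)

lemma translate_into_strip:
  assumes "0 < w"
  obtains n :: int where "-2 \<le> Re z - of_int n * w" "Re z - of_int n * w < w - 2"
proof
  define n where "n = \<lfloor>(Re z + 2) / w\<rfloor>"
  have "of_int n \<le> (Re z + 2) / w" "(Re z + 2) / w < of_int n + 1"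
    unfolding n_def by linarith+
  then show "-2 \<le> Re z - of_int n * w" "Re z - of_int n * w < w - 2"
    using assms by (simp_all add: field_simps)
qed

lemma inversion_height_gain:
  assumes "0 < y0" "y0 \<le> Im z" "1 < \<bar>Re (- (1 / z))\<bar>"
  shows "Im z * (1 + y0\<^sup>2) \<le> Im (- (1 / z))"
proof -
  define v where "v = - (1 / z)"
  have "z \<noteq> 0" using assms(1,2) by auto
  then have "cmod v = 1 / cmod z" by (simp add: v_def norm_divide)
  then have Im_v: "Im v = Im z * (cmod v)\<^sup>2"
    unfolding v_def Im_minus_inverse by (simp add: power_one_over divide_inverse power_inverse)
  have "1 < (Re v)\<^sup>2" using one_less_power[of "\<bar>Re v\<bar>" 2] assms(3) by (simp add: v_def)
  then have "1 < (cmod v)\<^sup>2" unfolding cmod_power2 using zero_le_power2[of "Im v"] by linarith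
  then have "Im z \<le> Im v" using Im_v assms(1,2) by simp
  then have "y0\<^sup>2 \<le> (Im v)\<^sup>2" using assms(1,2) by (intro power_mono) auto
  then have "1 + y0\<^sup>2 \<le> (cmod v)\<^sup>2" using \<open>1 < (Re v)\<^sup>2\<close> by (simp add: cmod_power2)
  then show ?thesis using Im_v assms(1,2) v_def by (simp add: mult_left_mono)
qed

lemma strip_step_right:
  assumes "3 \<le> w" "0 < y0" "y0 \<le> Im z" "cmod z < 1" "cmod z \<le> cmod (z + 1)"
  defines "u \<equiv> mobius R_mat z"
  shows "z = mobius R_inv u" "u \<in> Fbar w \<or> Im z * (1 + y0\<^sup>2) \<le> Im u"
proof -
  have "z \<noteq> 0" using assms(2,3) by auto
  then have u1: "u + 1 = - (1 / z)" by (simp add: u_def mobius_R_mat)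
  then show "z = mobius R_inv u" by (simp add: mobius_R_inv)
  have Im_u: "Im u = Im (- (1 / z))" using arg_cong[OF u1, of Im] by simp
  have "u = - ((z + 1) / z)" using \<open>z \<noteq> 0\<close> u1 by (simp add: field_simps)
  then have "1 \<le> cmod u" using \<open>z \<noteq> 0\<close> assms(5) by (simp add: norm_divide le_divide_eq)
  moreover have "1 < cmod (u + 1)"
    using \<open>z \<noteq> 0\<close> assms(4) unfolding u1 by (simp add: norm_divide less_divide_eq)
  moreover have "0 < Im u"
    unfolding Im_u Im_minus_inverse using assms(2,3) \<open>z \<noteq> 0\<close> by simp
  ultimately have "u \<in> Fbar w \<or> 1 < \<bar>Re (- (1 / z))\<bar>"
    using assms(1) unfolding u1[symmetric] by (auto simp: Fbar_def)
  then show "u \<in> Fbar w \<or> Im z * (1 + y0\<^sup>2) \<le> Im u"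
    using inversion_height_gain[OF assms(2,3)] Im_u by auto
qed

lemma strip_step_left:
  assumes "3 \<le> w" "0 < y0" "y0 \<le> Im z" "cmod (z + 1) < 1" "cmod (z + 1) \<le> cmod z"
  defines "u \<equiv> mobius R_inv z"
  shows "z = mobius R_mat u" "u \<in> Fbar w \<or> Im z * (1 + y0\<^sup>2) \<le> Im u"
proof -
  have "z + 1 \<noteq> 0" using assms(2,3) by (auto simp: complex_eq_iff)
  have u: "u = - (1 / (z + 1))" by (simp add: u_def mobius_R_inv)
  then have "u \<noteq> 0" using \<open>z + 1 \<noteq> 0\<close> by simp
  then show "z = mobius R_mat u" using u by (simp add: mobius_R_mat)
  have Im_u: "Im u = Im (- (1 / (z + 1)))" using u by simp
  have "u + 1 = z / (z + 1)" using \<open>z + 1 \<noteq> 0\<close> u by (simp add: field_simps)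
  then have "1 \<le> cmod (u + 1)" using \<open>z + 1 \<noteq> 0\<close> assms(5) by (simp add: norm_divide le_divide_eq)
  moreover have "1 < cmod u"
    using \<open>z + 1 \<noteq> 0\<close> assms(4) unfolding u by (simp add: norm_divide less_divide_eq)
  moreover have "0 < Im u"
    unfolding Im_u Im_minus_inverse using assms(2,3) \<open>z + 1 \<noteq> 0\<close> by simp
  ultimately have "u \<in> Fbar w \<or> 1 < \<bar>Re (- (1 / (z + 1)))\<bar>"
    using assms(1) unfolding u[symmetric] by (auto simp: Fbar_def)
  then show "u \<in> Fbar w \<or> Im z * (1 + y0\<^sup>2) \<le> Im u"
    using inversion_height_gain[of y0 "z + 1"] assms(2,3) Im_u by auto
qed

lemma strip_step:
  assumes "3 \<le> w" "0 < y0" "y0 \<le> Im z" "cmod z < 1 \<or> cmod (z + 1) < 1"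
  obtains S u where "S \<in> RT_group w" "z = mobius S u" "u \<in> Fbar w \<or> Im z * (1 + y0\<^sup>2) \<le> Im u"
proof -
  have sq: "(cmod (z + 1))\<^sup>2 = (cmod z)\<^sup>2 + 2 * Re z + 1"
    unfolding cmod_power2 by (simp add: power2_eq_square algebra_simps)
  show ?thesis
  proof (cases "-1/2 \<le> Re z")
    case True
    then have "(cmod z)\<^sup>2 \<le> (cmod (z + 1))\<^sup>2" using sq by linarith
    then have "cmod z \<le> cmod (z + 1)" by (rule power2_le_imp_le) simp
    then have "cmod z < 1" using assms(4) by linarith
    with \<open>cmod z \<le> cmod (z + 1)\<close> show ?thesis
      using strip_step_right[OF assms(1-3)] RT_group_R(2) that by blast
  next
    case False
    then have "(cmod (z + 1))\<^sup>2 \<le> (cmod z)\<^sup>2" using sq by linarith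
    then have "cmod (z + 1) \<le> cmod z" by (rule power2_le_imp_le) simp
    then have "cmod (z + 1) < 1" using assms(4) by linarith
    with \<open>cmod (z + 1) \<le> cmod z\<close> show ?thesis
      using strip_step_left[OF assms(1-3)] RT_group_R(1) that by blast
  qed
qed

lemma uncovered_step:
  assumes "3 \<le> w" "0 < y0" "y0 \<le> Im z" "z \<notin> RT_orbit w (Fbar w)"
  shows "Im z < 1" "\<exists>u. Im z * (1 + y0\<^sup>2) \<le> Im u \<and> u \<notin> RT_orbit w (Fbar w)"
proof -
  obtain n where n: "-2 \<le> Re z - of_int n * w" "Re z - of_int n * w < w - 2"
    using translate_into_strip[of w z] assms(1) by auto
  define z1 where "z1 = z - of_real (of_int n * w)"
  have "z = mobius (T_pow w n) z1" by (simp add: z1_def mobius_T_pow)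
  then have z1: "z1 \<notin> RT_orbit w (Fbar w)"
    using RT_orbit_mobius[OF RT_group_T_pow Fbar_upper_half_plane] assms(4) by metis
  then have "z1 \<notin> Fbar w" using subset_RT_orbit by blast
  moreover have "Im z1 = Im z" "Re z1 = Re z - of_int n * w" by (simp_all add: z1_def)
  ultimately have small: "cmod z1 < 1 \<or> cmod (z1 + 1) < 1"
    using n assms(2,3) by (auto simp: Fbar_def)
  then show "Im z < 1"
    using abs_Im_le_cmod[of z1] abs_Im_le_cmod[of "z1 + 1"] \<open>Im z1 = Im z\<close> by auto
  obtain S u where Su: "S \<in> RT_group w" "z1 = mobius S u" "u \<in> Fbar w \<or> Im z1 * (1 + y0\<^sup>2) \<le> Im u"
    using strip_step[OF assms(1,2) _ small] assms(3) \<open>Im z1 = Im z\<close> by auto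
  have "u \<notin> RT_orbit w (Fbar w)"
    using RT_orbit_mobius[OF Su(1) Fbar_upper_half_plane] Su(2) z1 by metis
  then show "\<exists>u. Im z * (1 + y0\<^sup>2) \<le> Im u \<and> u \<notin> RT_orbit w (Fbar w)"
    using Su(3) subset_RT_orbit \<open>Im z1 = Im z\<close> by (metis subsetD)
qed

lemma uncovered_height:
  assumes "3 \<le> w" "0 < y0" "y0 \<le> Im z" "z \<notin> RT_orbit w (Fbar w)"
  shows "Im z * (1 + y0\<^sup>2) ^ n < 1"
  using assms(3,4)
proof (induction n arbitrary: z)
  case 0
  then show ?case using uncovered_step(1)[OF assms(1,2)] by simp
next
  case (Suc n)
  obtain u where u: "Im z * (1 + y0\<^sup>2) \<le> Im u" "u \<notin> RT_orbit w (Fbar w)"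
    using uncovered_step(2)[OF assms(1,2) Suc.prems] by blast
  have "Im z \<le> Im z * (1 + y0\<^sup>2)" using Suc.prems(1) assms(2) by simp
  then have "Im u * (1 + y0\<^sup>2) ^ n < 1" using Suc.IH u Suc.prems(1) by simp
  moreover have "Im z * (1 + y0\<^sup>2) ^ Suc n \<le> Im u * (1 + y0\<^sup>2) ^ n"
    using u(1) by (simp add: mult.assoc[symmetric] mult_right_mono)
  ultimately show ?case by linarith
qed

theorem upper_half_plane_subset_RT_orbit:
  assumes "3 \<le> w"
  shows "upper_half_plane \<subseteq> RT_orbit w (Fbar w)"
proof
  fix z assume "z \<in> upper_half_plane"
  then have "0 < Im z" by (simp add: upper_half_plane_def)
  then obtain n where "1 / Im z < (1 + (Im z)\<^sup>2) ^ n"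
    using real_arch_pow[of "1 + (Im z)\<^sup>2" "1 / Im z"] by auto
  then have "1 \<le> Im z * (1 + (Im z)\<^sup>2) ^ n"
    using \<open>0 < Im z\<close> by (simp add: divide_less_eq mult.commute)
  then show "z \<in> RT_orbit w (Fbar w)"
    using uncovered_height[OF assms \<open>0 < Im z\<close> order_refl, of n] by linarith
qed

lemma open_Fdom: "open (Fdom w)"
proof -
  have "Fdom w = {z. 0 < Im z} \<inter> {z. -2 < Re z} \<inter> {z. Re z < w - 2} \<inter> {z. 1 < cmod z} \<inter> {z. 1 < cmod (z + 1)}"
    unfolding Fdom_def by auto
  moreover have "open {z. 0 < Im z}" "open {z. -2 < Re z}" "open {z. Re z < w - 2}"
    "open {z. 1 < cmod z}" "open {z::complex. 1 < cmod (z + 1)}"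
    by (intro open_Collect_less continuous_intros)+
  ultimately show ?thesis by auto
qed

lemma closure_vertical_strip:
  assumes "a < b" "a \<le> Re z" "Re z \<le> b"
  shows "z \<in> closure {z. a < Re z \<and> Re z < b}"
proof -
  define f where "f x = of_real x + \<i> * of_real (Im z)" for x
  have cont: "continuous_on (closure {a<..<b}) f" unfolding f_def by (intro continuous_intros)
  have "f ` {a<..<b} \<subseteq> {z. a < Re z \<and> Re z < b}"
    by (auto simp: f_def)
  then have "f ` closure {a<..<b} \<subseteq> closure {z. a < Re z \<and> Re z < b}"
    by (intro image_closure_subset[OF cont closed_closure] subset_trans[OF _ closure_subset])
  moreover have "Re z \<in> closure {a<..<b}" "f (Re z) = z"
    using assms by (simp_all add: f_def complex_eq_iff)
  ultimately show ?thesis unfolding image_subset_iff by metis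
qed

lemma cmod_less_add_imag:
  assumes "0 < Im z" "0 < t"
  shows "cmod z < cmod (z + \<i> * of_real t)"
proof -
  have "(Im z)\<^sup>2 < (Im z + t)\<^sup>2" using assms by (intro power_strict_mono) auto
  then have "(cmod z)\<^sup>2 < (cmod (z + \<i> * of_real t))\<^sup>2" by (simp add: cmod_power2)
  then show ?thesis by (rule power_less_imp_less_base) simp
qed

lemma Fbar_subset_closure_Fdom:
  assumes "0 < w"
  shows "Fbar w \<subseteq> closure (Fdom w)"
proof
  fix c assume c: "c \<in> Fbar w"
  define V where "V = {z. 0 < Im z \<and> 1 < cmod z \<and> 1 < cmod (z + 1)}"
  have "open V" unfolding V_def by (intro open_Collect_conj open_Collect_less continuous_intros)
  have "c \<in> closure (closure (Fdom w))"
    unfolding closure_approachable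
  proof (intro allI impI)
    fix e :: real assume "0 < e"
    define c' where "c' = c + \<i> * of_real (e / 2)"
    have "0 < Im c" using c by (simp add: Fbar_def)
    have "c' + 1 = (c + 1) + \<i> * of_real (e / 2)" by (simp add: c'_def)
    have "cmod (c + 1) < cmod (c' + 1)"
      unfolding \<open>c' + 1 = (c + 1) + \<i> * of_real (e / 2)\<close>
      using \<open>0 < Im c\<close> \<open>0 < e\<close> by (intro cmod_less_add_imag) auto
    moreover have "cmod c < cmod c'"
      using cmod_less_add_imag[of c "e / 2"] \<open>0 < Im c\<close> \<open>0 < e\<close> by (simp add: c'_def)
    moreover have "0 < Im c'" using \<open>0 < Im c\<close> \<open>0 < e\<close> by (simp add: c'_def)
    ultimately have "c' \<in> V"
      using c unfolding V_def Fbar_def by auto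
    moreover have "c' \<in> closure {z. -2 < Re z \<and> Re z < w - 2}"
      using c assms by (intro closure_vertical_strip) (auto simp: c'_def Fbar_def)
    ultimately have "c' \<in> V \<inter> closure {z. -2 < Re z \<and> Re z < w - 2}" by blast
    also have "\<dots> \<subseteq> closure (V \<inter> {z. -2 < Re z \<and> Re z < w - 2})"
      by (rule open_Int_closure_subset[OF \<open>open V\<close>])
    also have "V \<inter> {z. -2 < Re z \<and> Re z < w - 2} = Fdom w" by (auto simp: V_def Fdom_def)
    finally have "c' \<in> closure (Fdom w)" .
    moreover have "dist c' c < e" using \<open>0 < e\<close> by (simp add: c'_def dist_norm norm_mult)
    ultimately show "\<exists>y\<in>closure (Fdom w). dist y c < e" by blast
  qed
  then show "c \<in> closure (Fdom w)" by simp
qed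

theorem fundamental_domain_RT_group:
  assumes "3 \<le> w"
  shows "fundamental_domain (RT_group w) (Fdom w)"
  unfolding fundamental_domain_def
proof (intro conjI ballI impI)
  show "open (Fdom w)" by (rule open_Fdom)
  show "Fdom w \<subseteq> upper_half_plane" by (auto simp: Fdom_def upper_half_plane_def)
  have "Fbar w \<subseteq> closure (Fdom w) \<inter> upper_half_plane"
    using Fbar_subset_closure_Fdom Fbar_upper_half_plane assms by auto
  then show "upper_half_plane \<subseteq> (\<Union>g\<in>RT_group w. mobius g ` (closure (Fdom w) \<inter> upper_half_plane))"
    using upper_half_plane_subset_RT_orbit[OF assms] unfolding RT_orbit_def by blast
  show "mobius g ` Fdom w \<inter> Fdom w = {}" if "g \<in> RT_group w" "g \<noteq> mat 1 \<and> g \<noteq> - mat 1" for g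
    using RT_group_Fdom_disjoint[OF that(1) assms] that(2) by blast
qed

section \<open>Discreteness\<close>

lemma isCont_matrix_mult_entry: "isCont (\<lambda>h::real^2^2. ((A::real^2^2) ** h) $ i $ j) g"
  unfolding matrix_matrix_mult_def by (simp; intro continuous_intros; simp)

lemma isCont_mobius_mult:
  fixes A g :: "real^2^2"
  assumes "Im z \<noteq> 0" "det (A ** g) \<noteq> 0"
  shows "isCont (\<lambda>h. mobius (A ** h) z) g"
proof -
  have "(A ** g)$2$1 \<noteq> 0 \<or> (A ** g)$2$2 \<noteq> 0" using assms(2) by (auto simp: det_2)
  then have "of_real ((A ** g)$2$1) * z + of_real ((A ** g)$2$2) \<noteq> 0"
    by (rule mobius_denom_nonzero[OF assms(1)])
  then show ?thesis
    unfolding mobius_def by (intro continuous_intros isCont_matrix_mult_entry)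
qed

lemma RT_group_isolated:
  assumes "3 \<le> w" "g \<in> RT_group w"
  obtains e where "0 < e" "\<And>h. h \<in> RT_group w \<Longrightarrow> dist h g < e \<or> dist (- h) g < e \<Longrightarrow> h = g"
proof -
  define A where "A = adjugate2 g"
  have A: "A \<in> RT_group w" "A ** g = mat 1" "g ** A = mat 1"
    using RT_group_adjugate2[OF assms(2)] adjugate2_mult_left adjugate2_mult_right RT_group_det[OF assms(2)]
    by (simp_all add: A_def)
  define z0 where "z0 = Complex (-1/2) 2"
  have "cmod z0 = sqrt (17/4)" "cmod (z0 + 1) = sqrt (17/4)"
    by (simp_all add: z0_def cmod_def power2_eq_square one_complex.code plus_complex.code)
  moreover have "1 < sqrt (17/4)" by (simp add: real_less_rsqrt)
  ultimately have z0: "z0 \<in> Fdom w" using assms(1) by (simp add: Fdom_def z0_def)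
  define \<phi> where "\<phi> h = mobius (A ** h) z0" for h
  have "isCont \<phi> g" unfolding \<phi>_def using z0
    by (intro isCont_mobius_mult) (auto simp: A(2) Fdom_def mat2_one det_mat2)
  moreover have "\<phi> g = z0" by (simp add: \<phi>_def A(2))
  ultimately obtain S where S: "open S" "g \<in> S" "\<forall>h\<in>S. \<phi> h \<in> Fdom w"
    using open_Fdom z0 unfolding continuous_at_open by metis
  obtain e where e: "0 < e" "ball g e \<subseteq> S" using S(1,2) openE by metis
  have "h = g" if "h \<in> RT_group w" "\<phi> h \<in> Fdom w" for h
  proof -
    have "A ** h = mat 1"
      using RT_group_Fdom_disjoint[OF RT_group_mult[OF A(1) that(1)] assms(1) z0] that(2)
      by (simp add: \<phi>_def)
    then show "h = g" by (metis A(3) matrix_mul_assoc matrix_mul_lid matrix_mul_rid)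
  qed
  moreover have "\<phi> (- h) = \<phi> h" for h by (simp add: \<phi>_def matrix_mul_minus_right)
  ultimately show ?thesis
    using that[OF e(1)] e(2) S(3) by (metis dist_commute mem_ball subsetD)
qed

theorem discrete_in_PSL_RT_group:
  assumes "3 \<le> w"
  shows "discrete_in_PSL (RT_group w)"
  unfolding discrete_in_PSL_def
proof
  fix g assume "g \<in> RT_group w"
  then obtain e where "0 < e" "\<And>h. h \<in> RT_group w \<Longrightarrow> dist h g < e \<or> dist (- h) g < e \<Longrightarrow> h = g"
    using RT_group_isolated[OF assms] by blast
  moreover have "dist h (- g) = dist (- h) g" for h :: "real^2^2"
    by (simp add: dist_norm norm_minus_commute add.commute)
  ultimately show "\<exists>e>0. \<forall>h\<in>RT_group w. (dist h g < e \<or> dist h (- g) < e) \<longrightarrow> h = g \<or> h = - g"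
    by metis
qed

section \<open>The translation length\<close>

lemma lambda_equation_iff:
  fixes k l x :: real
  assumes "0 < x"
  shows "k * (x + 1) = l * (inverse x + 1 + x) \<longleftrightarrow> (k - l) * (x * (x + 1)) = l"
proof -
  have "k * (x + 1) = l * (inverse x + 1 + x) \<longleftrightarrow> x * (k * (x + 1)) = x * (l * (inverse x + 1 + x))"
    using assms by simp
  also have "x * (l * (inverse x + 1 + x)) = l + l * x + l * x * x"
    using assms by (simp add: field_simps)
  finally show ?thesis by (simp add: algebra_simps)
qed

lemma lambda_kl_eq:
  fixes k l :: int
  assumes "l < k" "0 < l"
  shows "0 < lambda_kl k l" "(k - l) * (lambda_kl k l * (lambda_kl k l + 1)) = l"
proof -
  define a where "a = real_of_int l / (k - l)"
  have kl: "0 < real_of_int k - l" using assms by simp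
  then have "0 < a" using assms by (simp add: a_def)
  have char: "0 < x \<and> real_of_int k * (x + 1) = l * (inverse x + 1 + x) \<longleftrightarrow> 0 < x \<and> x * (x + 1) = a" for x :: real
  proof (cases "0 < x")
    case True
    then show ?thesis using lambda_equation_iff[OF True, of k l] kl by (auto simp: a_def field_simps)
  qed simp
  define s where "s = sqrt (1 + 4 * a)"
  have "1 < s" "s\<^sup>2 = 1 + 4 * a" using \<open>0 < a\<close> by (simp_all add: s_def)
  define x0 where "x0 = (s - 1) / 2"
  have "0 < x0" using \<open>1 < s\<close> by (simp add: x0_def)
  have "x0 * (x0 + 1) = (s\<^sup>2 - 1) / 4" by (simp add: x0_def power2_eq_square field_simps)
  then have x0_eq: "x0 * (x0 + 1) = a" using \<open>s\<^sup>2 = 1 + 4 * a\<close> by simp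
  have uniq: "y = x0" if "0 < y" "y * (y + 1) = a" for y
  proof -
    have "(y - x0) * (y + x0 + 1) = 0" using that x0_eq by (simp add: algebra_simps)
    then show ?thesis using that \<open>0 < x0\<close> by simp
  qed
  have "\<exists>!x. 0 < x \<and> x * (x + 1) = a"
    using \<open>0 < x0\<close> x0_eq uniq by (intro ex1I[of _ x0]) blast+
  then have "\<exists>!x. 0 < x \<and> real_of_int k * (x + 1) = l * (inverse x + 1 + x)"
    by (simp only: char)
  then have "0 < lambda_kl k l \<and>
      real_of_int k * (lambda_kl k l + 1) = l * (inverse (lambda_kl k l) + 1 + lambda_kl k l)"
    unfolding lambda_kl_def by (rule theI')
  then have "0 < lambda_kl k l \<and> lambda_kl k l * (lambda_kl k l + 1) = a"
    by (rule char[THEN iffD1])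
  then show "0 < lambda_kl k l" "(k - l) * (lambda_kl k l * (lambda_kl k l + 1)) = l"
    using kl by (auto simp: a_def)
qed

lemma three_le_translation_length:
  fixes k l :: int
  assumes "l < k" "0 < l"
  shows "3 \<le> k * (1 + lambda_kl k l)"
proof (cases "3 \<le> k")
  case True
  have "3 * 1 \<le> real_of_int k * (1 + lambda_kl k l)"
    using True lambda_kl_eq(1)[OF assms] by (intro mult_mono) auto
  then show ?thesis by simp
next
  case False
  then have "k = 2" "l = 1" using assms by auto
  then have "lambda_kl k l * (lambda_kl k l + 1) = 1" using lambda_kl_eq(2)[OF assms] by simp
  moreover have "lambda_kl k l * (lambda_kl k l + 1) \<le> 1/2 * (1/2 + 1)" if "lambda_kl k l \<le> 1/2"
    using that lambda_kl_eq(1)[OF assms] by (intro mult_mono) auto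
  ultimately have "1/2 < lambda_kl k l" by force
  then show ?thesis using \<open>k = 2\<close> by simp
qed

theorem mainTheorem8:
  fixes k l :: int
  assumes "k > l" "l > 0" "coprime k l"
  defines "lam \<equiv> lambda_kl k l"
  defines "T \<equiv> mat2 1 (real_of_int k * (1 + lam)) 0 1"
  defines "R \<equiv> mat2 (-1) (-1) 1 0"
  defines "G \<equiv> gen_group {R, T}"
  defines "F \<equiv> {z \<in> upper_half_plane. -2 < Re z \<and> Re z < real_of_int k * (1 + lam) - 2
                  \<and> cmod z > 1 \<and> cmod (z + 1) > 1}"
  shows "discrete_in_PSL G \<and> fundamental_domain G F"
proof -
  define w where "w = real_of_int k * (1 + lam)"
  have "3 \<le> w" using three_le_translation_length[OF assms(1,2)] by (simp add: w_def lam_def)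
  moreover have "G = RT_group w" by (simp add: G_def R_def T_def w_def R_mat_def)
  moreover have "F = Fdom w" by (auto simp: F_def Fdom_def w_def upper_half_plane_def)
  ultimately show ?thesis using discrete_in_PSL_RT_group fundamental_domain_RT_group by simp
qed

end
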